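(* The Lagrange spectrum and the Markov spectrum of $\mathbb{Q}((1/T))$ coincide.
   Context: $\mathbb{Q}((1/T))$ is the field of formal Laurent series $\sum_{i=-\infty}^m a_iT^i$ with $a_i\in\mathbb{Q}$; for nonzero $\alpha$ with leading term $a_mT^m$ ($a_m\ne0$) set $\deg\alpha=m$, and $\deg0=-\infty$. Lagrange spectrum: for $\alpha\notin\mathbb{Q}(T)$, $l(\alpha)\in\mathbb{Z}\cup\{\infty\}$ is the supremum of integers $k$ such that $\deg(\alpha-p/q)\le-2\deg q-k$ for infinitely many $p,q\in\mathbb{Q}[T]$, $q\ne0$; $\mathbb{L}=\{l(\alpha):\alpha\in\mathbb{Q}((1/T))\setminus\mathbb{Q}(T)\}$. Markov spectrum: a binary quadratic form is $Q=AX^2+BXY+CY^2$ with $A,B,C\in\mathbb{Q}((1/T))$ not all in $\mathbb{Q}(T)$, discriminant $D=B^2-4AC$; it is indefinite if $D\ne0$ is a square in $\mathbb{Q}((1/T))$; $m(Q)=\inf\{\deg Q(X,Y):X,Y\in\mathbb{Q}[T],(X,Y)\neq(0,0)\}$; $\mathcal{M}=\{\tfrac{\deg D}{2}-m(Q): Q\text{ indefinite}\}$, with value $+\infty$ when $m(Q)=-\infty$. *)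

theory Defs
  imports "HOL-Computational_Algebra.Formal_Laurent_Series" "HOL-Library.Extended_Real"
begin

text \<open>Q((1/T)) is modelled as rat fls with X = 1/T, so T = fls_X_inv.
  The coefficient of T^i is the coefficient of X^(-i).\<close>

type_synonym lser = "rat fls"

definition polyT :: "rat poly \<Rightarrow> lser" where
  "polyT p = poly (map_poly fls_const p) fls_X_inv"

definition degL :: "lser \<Rightarrow> ereal" where
  "degL a = (if a = 0 then -\<infinity> else ereal (of_int (- fls_subdegree a)))"

definition ratfunT :: "lser set" where
  "ratfunT = {polyT p / polyT q | p q. q \<noteq> 0}"

definition lagrange_value :: "lser \<Rightarrow> ereal" where
  "lagrange_value \<alpha> = Sup {ereal (of_int k) | k::int.
     infinite {polyT p / polyT q | p q. q \<noteq> 0 \<and>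
        degL (\<alpha> - polyT p / polyT q) \<le> ereal (of_int (- 2 * int (degree q) - k))}}"

definition lagrange_spectrum :: "ereal set" where
  "lagrange_spectrum = lagrange_value ` (UNIV - ratfunT)"

definition qf_disc :: "lser \<Rightarrow> lser \<Rightarrow> lser \<Rightarrow> lser" where
  "qf_disc A B C = B^2 - 4 * A * C"

definition qf_indefinite :: "lser \<Rightarrow> lser \<Rightarrow> lser \<Rightarrow> bool" where
  "qf_indefinite A B C \<longleftrightarrow>
     \<not> (A \<in> ratfunT \<and> B \<in> ratfunT \<and> C \<in> ratfunT) \<and>
     qf_disc A B C \<noteq> 0 \<and> (\<exists>E. qf_disc A B C = E^2)"

definition qf_min :: "lser \<Rightarrow> lser \<Rightarrow> lser \<Rightarrow> ereal" where
  "qf_min A B C = Inf {degL (A * (polyT x)^2 + B * polyT x * polyT y + C * (polyT y)^2)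
     | x y :: rat poly. (x, y) \<noteq> (0, 0)}"

definition markov_spectrum :: "ereal set" where
  "markov_spectrum = {degL (qf_disc A B C) / 2 - qf_min A B C | A B C. qf_indefinite A B C}"

end

(*
  Both spectra equal {1, 2, ...} \<union> {\<infinity>}.

  Dirichlet's theorem (linear algebra over Q) gives, for every series \<theta> and every n, a
  polynomial q of degree at most n with deg (q \<theta> - p) < -n. For irrational \<alpha> this yields
  infinitely many approximations of order 1, and for an indefinite form with discriminant E^2,
  approximating a root of Q(X, 1) yields a value of degree below deg E. As Lagrange and Markov
  values are a supremum, resp. a difference with an infimum, of integers, both lie in
  {1, 2, ...} \<union> {\<infinity>}.

  Conversely, the root \<beta> of \<beta>^2 = T^k \<beta> + 1 of degree -k has the convergents -F_n / F_(n+1),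
  with F_n the Fibonacci polynomials in T^k, approximating it to order exactly k, while the
  conjugate root bounds every approximation (Liouville); and X^2 - T^k X Y - Y^2 is a norm form
  that never vanishes, so \<beta> (X^2 - T^k X Y - Y^2) has Markov value k. The lacunary series
  \<Sum> T^(-3^n) has Lagrange value \<infinity>, and X Y + \<alpha> Y^2 represents 0.
*)
theory Submission
  imports Defs
begin

section \<open>Polynomials in T as Laurent series\<close>

lemma polyT_0 [simp]: "polyT 0 = 0"
  by (simp add: polyT_def)

lemma polyT_pCons: "polyT (pCons a p) = fls_const a + fls_X_inv * polyT p"
  by (simp add: polyT_def map_poly_pCons)

lemma polyT_add [simp]: "polyT (p + q) = polyT p + polyT q"
proof (induction p arbitrary: q)
  case (pCons a p)
  then show ?case
    by (cases q) (simp add: polyT_pCons fls_plus_const[symmetric] distrib_left)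
qed simp

lemma polyT_uminus [simp]: "polyT (- p) = - polyT p"
  by (induction p) (simp_all add: polyT_pCons algebra_simps)

lemma polyT_diff [simp]: "polyT (p - q) = polyT p - polyT q"
  using polyT_add[of p "- q"] by simp

lemma polyT_smult [simp]: "polyT (smult a p) = fls_const a * polyT p"
  by (induction p) (simp_all add: polyT_pCons algebra_simps flip: fls_const_mult_const)

lemma polyT_mult [simp]: "polyT (p * q) = polyT p * polyT q"
  by (induction p) (simp_all add: polyT_pCons algebra_simps)

lemma polyT_1 [simp]: "polyT 1 = 1"
  by (simp add: polyT_def)

lemma polyT_power [simp]: "polyT (p ^ n) = polyT p ^ n"
  by (induction n) simp_all

lemma polyT_monom [simp]: "polyT (monom a i) = fls_const a * fls_X_inv ^ i"
proof -
  have "polyT [:0, 1:] = fls_X_inv"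
    by (simp add: polyT_pCons)
  then show ?thesis
    by (simp add: monom_altdef)
qed

lemma polyT_sum: "polyT (sum f A) = (\<Sum>x\<in>A. polyT (f x))"
  by (induction A rule: infinite_finite_induct) simp_all

lemma fls_nth_polyT: "fls_nth (polyT p) t = (if t \<le> 0 then coeff p (nat (- t)) else 0)"
proof (induction p arbitrary: t)
  case (pCons a p)
  have "fls_nth (fls_X_inv * polyT p) t = fls_nth (polyT p) (t + 1)"
    by (simp add: fls_X_inv_times_conv_shift)
  then show ?case
    using pCons.IH[of "t + 1"]
    by (auto simp: polyT_pCons coeff_pCons' nat_diff_distrib' intro!: arg_cong[where f = "coeff p"])
qed simp

lemma polyT_eq_0_iff [simp]: "polyT p = 0 \<longleftrightarrow> p = 0"
proof
  assume "polyT p = 0"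
  then have "coeff p n = 0" for n
    using fls_nth_polyT[of p "- int n"] by simp
  then show "p = 0"
    by (simp add: poly_eqI)
qed simp

lemma fls_subdegree_polyT: "p \<noteq> 0 \<Longrightarrow> fls_subdegree (polyT p) = - int (degree p)"
  by (rule fls_subdegree_eqI) (auto simp: fls_nth_polyT coeff_eq_0)

lemma polyT_polynomial_part: "\<exists>x. \<forall>t\<le>0. fls_nth (polyT x) t = fls_nth z t"
proof -
  define N where "N = nat (- fls_subdegree z)"
  define x where "x = (\<Sum>i\<le>N. monom (fls_nth z (- int i)) i)"
  have "fls_nth (polyT x) t = fls_nth z t" if "t \<le> 0" for t
  proof (cases "nat (- t) \<le> N")
    case True
    then show ?thesis
      using that by (simp add: fls_nth_polyT x_def coeff_sum coeff_monom)
  next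
    case False
    then have "t < fls_subdegree z"
      using that unfolding N_def by linarith
    then show ?thesis
      using False that by (simp add: fls_nth_polyT x_def coeff_sum coeff_monom)
  qed
  then show ?thesis
    by blast
qed

section \<open>Dirichlet's approximation theorem\<close>

lemma sum_mult_fun_upd:
  assumes "finite I" "j \<in> I"
  shows "(\<Sum>i\<in>I. d i * (w(j := a)) i) = d j * a + (\<Sum>i\<in>I - {j}. d i * w i)"
proof -
  have "(\<Sum>i\<in>I - {j}. d i * (w(j := a)) i) = (\<Sum>i\<in>I - {j}. d i * w i)"
    by (rule sum.cong) auto
  then show ?thesis
    using assms by (simp add: sum.remove)
qed

lemma homogeneous_system_nontrivial_solution:
  fixes cs :: "('i \<Rightarrow> 'a::field) list"
  assumes "finite I" "length cs < card I"
  shows "\<exists>v. (\<exists>i\<in>I. v i \<noteq> 0) \<and> (\<forall>c\<in>set cs. (\<Sum>i\<in>I. c i * v i) = 0)"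
  using assms
proof (induction "length cs" arbitrary: cs I)
  case 0
  then have "I \<noteq> {}"
    by auto
  then show ?case
    using 0 by (intro exI[of _ "\<lambda>_. 1"]) auto
next
  case (Suc m cs0)
  then obtain c cs where cs0: "cs0 = c # cs" and m: "m = length cs"
    by (cases cs0) auto
  show ?case
  proof (cases "\<forall>i\<in>I. c i = 0")
    case True
    then show ?thesis
      using Suc.hyps(1)[OF m Suc.prems(1)] Suc.prems(2) cs0 by auto
  next
    case False
    then obtain j where j: "j \<in> I" "c j \<noteq> 0"
      by blast
    \<comment> \<open>Eliminate the variable \<open>j\<close> by means of the equation \<open>c\<close>.\<close>
    define elim where "elim d i = d i - d j * c i / c j" for d :: "'i \<Rightarrow> 'a" and i
    have "length (map elim cs) < card (I - {j})"
      using Suc.prems j cs0 by auto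
    then obtain w where w: "\<exists>i\<in>I - {j}. w i \<noteq> 0" "\<forall>d\<in>set cs. (\<Sum>i\<in>I - {j}. elim d i * w i) = 0"
      using Suc.hyps(1)[of "map elim cs" "I - {j}"] m Suc.prems(1) by auto
    define a where "a = - (\<Sum>i\<in>I - {j}. c i * w i) / c j"
    have "(\<Sum>i\<in>I. d i * (w(j := a)) i) = 0" if "d \<in> set cs" for d
    proof -
      have "(\<Sum>i\<in>I - {j}. elim d i * w i)
          = (\<Sum>i\<in>I - {j}. d i * w i) - d j / c j * (\<Sum>i\<in>I - {j}. c i * w i)"
        by (simp add: elim_def algebra_simps sum_subtractf sum_distrib_left)
      then show ?thesis
        using w(2) that j unfolding sum_mult_fun_upd[OF Suc.prems(1) j(1)] by (simp add: a_def field_simps)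
    qed
    moreover have "(\<Sum>i\<in>I. c i * (w(j := a)) i) = 0"
      unfolding sum_mult_fun_upd[OF Suc.prems(1) j(1)] using j by (simp add: a_def)
    moreover have "\<exists>i\<in>I. (w(j := a)) i \<noteq> 0"
      using w(1) by auto
    ultimately show ?thesis
      using cs0 by (intro exI[of _ "w(j := a)"]) auto
  qed
qed

lemma fls_nth_polyT_mult:
  assumes "degree y \<le> n"
  shows "fls_nth (polyT y * \<theta>) t = (\<Sum>i\<le>n. coeff y i * fls_nth \<theta> (t + int i))"
proof -
  have "polyT y = (\<Sum>i\<le>n. fls_const (coeff y i) * fls_X_inv ^ i)"
    using arg_cong[OF poly_as_sum_of_monoms'[OF assms], of polyT] by (simp add: polyT_sum)
  then show ?thesis
    by (simp add: sum_distrib_right fls_nth_sum mult.assoc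
        fls_X_inv_power_times_conv_shift fls_shifted_times_simps)
qed

lemma dirichlet_approximation:
  fixes \<theta> :: lser
  shows "\<exists>y x. y \<noteq> 0 \<and> degree y \<le> n \<and>
    (polyT y * \<theta> - polyT x = 0 \<or> int n + 1 \<le> fls_subdegree (polyT y * \<theta> - polyT x))"
proof -
  define cs where "cs = map (\<lambda>t i. fls_nth \<theta> (int t + int i)) [1..<Suc n]"
  have "length cs < card {..n}"
    by (simp add: cs_def)
  then obtain v where v: "\<exists>i\<in>{..n}. v i \<noteq> 0" and system: "\<forall>c\<in>set cs. (\<Sum>i\<le>n. c i * v i) = 0"
    using homogeneous_system_nontrivial_solution[of "{..n}" cs] by auto
  define y where "y = (\<Sum>i\<le>n. monom (v i) i)"
  have coeff_y: "coeff y i = (if i \<le> n then v i else 0)" for i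
    by (simp add: y_def coeff_sum coeff_monom)
  have "y \<noteq> 0"
    using v coeff_y by (metis atMost_iff coeff_0)
  moreover have deg_y: "degree y \<le> n"
    by (rule degree_le) (simp add: coeff_y)
  moreover obtain x where x: "\<forall>t\<le>0. fls_nth (polyT x) t = fls_nth (polyT y * \<theta>) t"
    using polyT_polynomial_part by blast
  have "fls_nth (polyT y * \<theta> - polyT x) t = 0" if "t \<le> int n" for t
  proof (cases "t \<le> 0")
    case False
    have "fls_nth (polyT y * \<theta>) t = (\<Sum>i\<le>n. v i * fls_nth \<theta> (t + int i))"
      using fls_nth_polyT_mult[OF deg_y] by (simp add: coeff_y)
    also have "\<dots> = 0"
    proof -
      have "nat t \<in> {1..<Suc n}"
        using False that by auto
      then have "(\<lambda>i. fls_nth \<theta> (int (nat t) + int i)) \<in> set cs"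
        unfolding cs_def set_map set_upt by (rule imageI)
      then have "(\<Sum>i\<le>n. fls_nth \<theta> (int (nat t) + int i) * v i) = 0"
        by (rule bspec[OF system])
      then show ?thesis
        using False by (simp add: mult.commute)
    qed
    finally show ?thesis
      using False by (simp add: fls_nth_polyT)
  qed (use x in simp)
  then have "polyT y * \<theta> - polyT x = 0 \<or> int n + 1 \<le> fls_subdegree (polyT y * \<theta> - polyT x)"
    by (auto intro!: fls_subdegree_geI)
  ultimately show ?thesis
    by blast
qed

section \<open>Both spectra lie in \<open>{1, 2, \<dots>} \<union> {\<infinity>}\<close>\<close>

lemma degL_le_iff: "degL a \<le> ereal (of_int m) \<longleftrightarrow> a = 0 \<or> - fls_subdegree a \<le> m"
  by (simp add: degL_def) (metis of_int_le_iff of_int_minus)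

lemma Sup_ereal_of_int_cases:
  fixes K :: "int set"
  assumes "K \<noteq> {}"
  shows "Sup ((\<lambda>k. ereal (of_int k)) ` K) = \<infinity> \<or>
    Sup ((\<lambda>k. ereal (of_int k)) ` K) \<in> (\<lambda>k. ereal (of_int k)) ` K"
proof (cases "bdd_above K")
  case True
  then obtain b where b: "\<And>k. k \<in> K \<Longrightarrow> k \<le> b"
    by (auto simp: bdd_above_def)
  obtain k0 where k0: "k0 \<in> K"
    using assms by blast
  define m where "m = Max (K \<inter> {k0..b})"
  have fin: "finite (K \<inter> {k0..b})" and k0_mem: "k0 \<in> K \<inter> {k0..b}"
    using k0 b by auto
  have m: "m \<in> K" "k0 \<le> m"
    using Max_in[OF fin] Max_ge[OF fin k0_mem] k0_mem unfolding m_def by blast+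
  have "k \<le> m" if "k \<in> K" for k
    using that b m(2) Max_ge[OF fin, of k] unfolding m_def by (cases "k0 \<le> k") auto
  then have "Sup ((\<lambda>k. ereal (of_int k)) ` K) = ereal (of_int m)"
    using m(1) by (intro cSup_eq_maximum) auto
  then show ?thesis
    using m(1) by auto
next
  case False
  have "Sup ((\<lambda>k. ereal (of_int k)) ` K) = \<infinity>"
  proof (rule ccontr)
    assume "Sup ((\<lambda>k. ereal (of_int k)) ` K) \<noteq> \<infinity>"
    then obtain r :: nat where r: "Sup ((\<lambda>k. ereal (of_int k)) ` K) < ereal (real r)"
      by (auto simp: less_PInf_Ex_of_nat)
    have "k \<le> int r" if "k \<in> K" for k
    proof -
      have "ereal (of_int k) < ereal (real r)"
        using SUP_upper[OF that, of "\<lambda>k. ereal (of_int k)"] r by (rule order.strict_trans1)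
      then show ?thesis
        by simp
    qed
    then show False
      using False by (auto simp: bdd_above_def)
  qed
  then show ?thesis ..
qed

lemma Inf_ereal_of_int_cases:
  fixes K :: "int set"
  assumes "K \<noteq> {}"
  shows "Inf ((\<lambda>k. ereal (of_int k)) ` K) = - \<infinity> \<or>
    Inf ((\<lambda>k. ereal (of_int k)) ` K) \<in> (\<lambda>k. ereal (of_int k)) ` K"
proof -
  have "uminus ` (\<lambda>k. ereal (of_int k)) ` K = (\<lambda>k. ereal (of_int k)) ` uminus ` K"
    by (auto simp: image_image)
  then have "Inf ((\<lambda>k. ereal (of_int k)) ` K) = - Sup ((\<lambda>k. ereal (of_int k)) ` uminus ` K)"
    by (metis ereal_Sup_uminus_image_eq ereal_uminus_uminus)
  moreover have "uminus ` K \<noteq> {}"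
    using assms by simp
  ultimately show ?thesis
    using Sup_ereal_of_int_cases[of "uminus ` K"] by (auto simp: image_image)
qed

lemma Inf_degL_cases:
  assumes "W \<noteq> {}" "W \<subseteq> range degL"
  shows "Inf W = - \<infinity> \<or> (\<exists>m::int. Inf W = ereal (of_int m))"
proof (cases "- \<infinity> \<in> W")
  case True
  then show ?thesis
    using Inf_lower[OF True] by simp
next
  case False
  have "W = (\<lambda>k. ereal (of_int k)) ` {k. ereal (of_int k) \<in> W}"
  proof safe
    fix w assume "w \<in> W"
    moreover obtain a where "w = degL a"
      using \<open>w \<in> W\<close> assms(2) by blast
    ultimately show "w \<in> (\<lambda>k. ereal (of_int k)) ` {k. ereal (of_int k) \<in> W}"
      using False by (auto simp: degL_def intro: rev_image_eqI[of "- fls_subdegree a"])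
  qed
  then show ?thesis
    using Inf_ereal_of_int_cases[of "{k. ereal (of_int k) \<in> W}"] assms(1) by auto
qed

definition pos_ints_infty :: "ereal set" where
  "pos_ints_infty = insert \<infinity> ((\<lambda>k. ereal (of_int k)) ` {1..})"

definition approx_set :: "lser \<Rightarrow> int \<Rightarrow> lser set" where
  "approx_set \<alpha> k = {polyT p / polyT q | p q. q \<noteq> 0 \<and>
     degL (\<alpha> - polyT p / polyT q) \<le> ereal (of_int (- 2 * int (degree q) - k))}"

lemma lagrange_value_approx_set:
  "lagrange_value \<alpha> = Sup ((\<lambda>k. ereal (of_int k)) ` {k. infinite (approx_set \<alpha> k)})"
  unfolding lagrange_value_def approx_set_def by (intro arg_cong[where f = Sup]) auto

lemma approx_setI:
  assumes "q \<noteq> 0" "2 * int (degree q) + k \<le> fls_subdegree (\<alpha> - polyT p / polyT q)"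
  shows "polyT p / polyT q \<in> approx_set \<alpha> k"
  using assms unfolding approx_set_def degL_le_iff by (intro CollectI exI[of _ p] exI[of _ q]) auto

lemma approx_setE:
  assumes "r \<in> approx_set \<alpha> k" "\<alpha> \<notin> ratfunT"
  obtains p q where "q \<noteq> 0" "r = polyT p / polyT q"
    "2 * int (degree q) + k \<le> fls_subdegree (\<alpha> - polyT p / polyT q)"
proof -
  obtain p q where pq: "q \<noteq> 0" "r = polyT p / polyT q"
    and "degL (\<alpha> - polyT p / polyT q) \<le> ereal (of_int (- 2 * int (degree q) - k))"
    using assms(1) unfolding approx_set_def by blast
  moreover have "\<alpha> \<noteq> polyT p / polyT q"
    using assms(2) pq(1) unfolding ratfunT_def by blast
  ultimately show ?thesis
    using that unfolding degL_le_iff by force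
qed

lemma infinite_approx_setI:
  assumes "infinite A" "\<And>n. n \<in> A \<Longrightarrow> r n \<in> approx_set \<alpha> k"
    and "inj_on (\<lambda>n. fls_subdegree (\<alpha> - r n)) A"
  shows "infinite (approx_set \<alpha> k)"
proof -
  have "inj_on r A"
    using assms(3) by (intro inj_on_imageI2[of "\<lambda>r. fls_subdegree (\<alpha> - r)"]) (simp add: comp_def)
  then have "infinite (r ` A)"
    using assms(1) finite_imageD by blast
  then show ?thesis
    using assms(2) by (meson finite_subset image_subsetI)
qed

lemma infinite_approx_set_1:
  assumes "\<alpha> \<notin> ratfunT"
  shows "infinite (approx_set \<alpha> 1)"
proof
  assume fin: "finite (approx_set \<alpha> 1)"
  define M where "M = Max (insert 0 ((\<lambda>r. fls_subdegree (\<alpha> - r)) ` approx_set \<alpha> 1))"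
  have M: "fls_subdegree (\<alpha> - r) \<le> M" if "r \<in> approx_set \<alpha> 1" for r
    unfolding M_def using fin that by (intro Max_ge) auto
  have "0 \<le> M"
    unfolding M_def using fin by (intro Max_ge) auto
  \<comment> \<open>A Dirichlet approximation of order beyond \<open>M\<close> is a new element of the set.\<close>
  obtain y x where y: "y \<noteq> 0" "degree y \<le> nat M"
    and z: "polyT y * \<alpha> - polyT x = 0 \<or> int (nat M) + 1 \<le> fls_subdegree (polyT y * \<alpha> - polyT x)"
    using dirichlet_approximation by blast
  have quotient: "\<alpha> - polyT x / polyT y = (polyT y * \<alpha> - polyT x) / polyT y"
    using y(1) by (simp add: field_simps)
  have "polyT y * \<alpha> - polyT x \<noteq> 0"
    using assms y(1) quotient ratfunT_def by force
  then have "fls_subdegree (\<alpha> - polyT x / polyT y) = fls_subdegree (polyT y * \<alpha> - polyT x) + int (degree y)"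
      and "M + 1 \<le> fls_subdegree (polyT y * \<alpha> - polyT x)"
    using z y \<open>0 \<le> M\<close> by (simp_all add: quotient fls_divide_subdegree fls_subdegree_polyT)
  moreover from this have "polyT x / polyT y \<in> approx_set \<alpha> 1"
    using y \<open>0 \<le> M\<close> by (intro approx_setI) (auto simp: le_nat_iff)
  ultimately show False
    using M by fastforce
qed

lemma lagrange_value_in_pos_ints_infty:
  assumes "\<alpha> \<notin> ratfunT"
  shows "lagrange_value \<alpha> \<in> pos_ints_infty"
proof -
  let ?K = "{k. infinite (approx_set \<alpha> k)}"
  have "1 \<in> ?K"
    using infinite_approx_set_1[OF assms] by simp
  then have "ereal (of_int 1) \<le> lagrange_value \<alpha>"
    unfolding lagrange_value_approx_set by (rule SUP_upper)
  consider "lagrange_value \<alpha> = \<infinity>" | k where "lagrange_value \<alpha> = ereal (of_int k)"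
    using Sup_ereal_of_int_cases[of ?K] \<open>1 \<in> ?K\<close> unfolding lagrange_value_approx_set by blast
  then show ?thesis
  proof cases
    case 1
    then show ?thesis
      by (simp add: pos_ints_infty_def)
  next
    case (2 k)
    then have "1 \<le> k"
      using \<open>ereal (of_int 1) \<le> lagrange_value \<alpha>\<close> by simp
    then show ?thesis
      using 2 by (simp add: pos_ints_infty_def)
  qed
qed

lemma lagrange_value_eqI:
  assumes "infinite (approx_set \<alpha> k)" "\<And>j. k < j \<Longrightarrow> finite (approx_set \<alpha> j)"
  shows "lagrange_value \<alpha> = ereal (of_int k)"
  unfolding lagrange_value_approx_set
proof (rule cSup_eq_maximum)
  show "ereal (of_int k) \<in> (\<lambda>k. ereal (of_int k)) ` {k. infinite (approx_set \<alpha> k)}"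
    using assms(1) by simp
  fix x
  assume "x \<in> (\<lambda>k. ereal (of_int k)) ` {k. infinite (approx_set \<alpha> k)}"
  then obtain j where "infinite (approx_set \<alpha> j)" "x = ereal (of_int j)"
    by blast
  moreover from this have "j \<le> k"
    using assms(2) by (meson not_le)
  ultimately show "x \<le> ereal (of_int k)"
    by simp
qed

lemma lagrange_value_eq_infinity:
  assumes "\<And>k. infinite (approx_set \<alpha> k)"
  shows "lagrange_value \<alpha> = \<infinity>"
proof -
  have "lagrange_value \<alpha> = Sup (range (\<lambda>k. ereal (of_int k)))"
    using assms by (simp add: lagrange_value_approx_set)
  moreover have "Sup (range (\<lambda>k. ereal (of_int k))) \<notin> range (\<lambda>k. ereal (of_int k))"
  proof
    assume "Sup (range (\<lambda>k. ereal (of_int k))) \<in> range (\<lambda>k. ereal (of_int k))"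
    then obtain k where "Sup (range (\<lambda>k. ereal (of_int k))) = ereal (of_int k)"
      by blast
    moreover have "ereal (of_int (k + 1)) \<le> Sup (range (\<lambda>k. ereal (of_int k)))"
      by (rule SUP_upper) simp
    ultimately show False
      by simp
  qed
  ultimately show ?thesis
    using Sup_ereal_of_int_cases[of UNIV] by auto
qed

lemma qf_small_value:
  assumes disc: "qf_disc A B C = E ^ 2" and "E \<noteq> 0"
  shows "\<exists>x y. (x, y) \<noteq> (0, 0) \<and>
    degL (A * (polyT x)^2 + B * polyT x * polyT y + C * (polyT y)^2) \<le> ereal (of_int (- fls_subdegree E - 1))"
proof (cases "A = 0")
  case True
  then show ?thesis
    by (intro exI[of _ 1] exI[of _ 0]) (simp add: degL_def)
next
  case False
  define \<theta> where "\<theta> = (E - B) / (2 * A)"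
  have \<theta>: "2 * A * \<theta> = E - B"
    using False by (simp add: \<theta>_def)
  have "A * (A * \<theta>^2 + B * \<theta> + C) = 0"
    using \<theta> disc unfolding qf_disc_def by algebra
  then have root: "A * \<theta>^2 + B * \<theta> + C = 0"
    using False by simp
  define n where "n = nat (fls_subdegree E - fls_subdegree A)"
  obtain y x where y: "y \<noteq> 0" "degree y \<le> n"
    and z: "polyT y * \<theta> - polyT x = 0 \<or> int n + 1 \<le> fls_subdegree (polyT y * \<theta> - polyT x)"
    using dirichlet_approximation by blast
  define z where "z = polyT y * \<theta> - polyT x"
  \<comment> \<open>Substituting \<open>x = y \<theta> - z\<close> makes the terms without \<open>z\<close> vanish, as \<open>\<theta>\<close> is a root.\<close>
  have Q_xy: "A * (polyT x)^2 + B * polyT x * polyT y + C * (polyT y)^2 = A * z^2 + - (E * polyT y * z)"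
  proof -
    have "polyT x = polyT y * \<theta> - z"
      by (simp add: z_def)
    then show ?thesis
      using root \<theta> by algebra
  qed
  have "A * z^2 + - (E * polyT y * z) = 0 \<or>
      fls_subdegree E + 1 \<le> fls_subdegree (A * z^2 + - (E * polyT y * z))"
  proof (cases "z = 0")
    case False
    then have "int n + 1 \<le> fls_subdegree z"
      using z by (simp add: z_def)
    moreover have "- int n \<le> fls_subdegree (polyT y)"
      using y by (simp add: fls_subdegree_polyT)
    moreover have "fls_subdegree E - fls_subdegree A \<le> int n"
      by (simp add: n_def)
    ultimately have "fls_subdegree E + 1 \<le> fls_subdegree (A * z^2)"
      and "fls_subdegree E + 1 \<le> fls_subdegree (- (E * polyT y * z))"
      using False \<open>A \<noteq> 0\<close> \<open>E \<noteq> 0\<close> y(1) by (simp_all add: fls_subdegree_pow)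
    then show ?thesis
      using fls_plus_subdegree[of "A * z^2" "- (E * polyT y * z)"] by linarith
  qed simp
  then have "degL (A * (polyT x)^2 + B * polyT x * polyT y + C * (polyT y)^2)
      \<le> ereal (of_int (- fls_subdegree E - 1))"
    unfolding Q_xy degL_le_iff by auto
  moreover have "(x, y) \<noteq> (0, 0)"
    using y(1) by simp
  ultimately show ?thesis
    by blast
qed

lemma markov_value_in_pos_ints_infty:
  assumes "qf_indefinite A B C"
  shows "degL (qf_disc A B C) / 2 - qf_min A B C \<in> pos_ints_infty"
proof -
  obtain E where disc: "qf_disc A B C = E ^ 2" and "E \<noteq> 0"
    using assms unfolding qf_indefinite_def by auto
  define W where "W = {degL (A * (polyT x)^2 + B * polyT x * polyT y + C * (polyT y)^2)
     | x y :: rat poly. (x, y) \<noteq> (0, 0)}"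
  have qf_min: "qf_min A B C = Inf W"
    unfolding qf_min_def W_def ..
  have half_deg: "degL (qf_disc A B C) / 2 = ereal (of_int (- fls_subdegree E))"
    using \<open>E \<noteq> 0\<close> by (simp add: disc degL_def fls_subdegree_pow)
  obtain w where w: "w \<in> W" "w \<le> ereal (of_int (- fls_subdegree E - 1))"
    using qf_small_value[OF disc \<open>E \<noteq> 0\<close>] unfolding W_def by blast
  have "W \<subseteq> range degL"
    unfolding W_def by blast
  then consider "Inf W = - \<infinity>" | m :: int where "Inf W = ereal (of_int m)"
    using Inf_degL_cases[of W] w(1) by blast
  then show ?thesis
  proof cases
    case 1
    then show ?thesis
      by (simp add: qf_min half_deg pos_ints_infty_def)
  next
    case (2 m)
    then have "ereal (of_int m) \<le> ereal (of_int (- fls_subdegree E - 1))"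
      using Inf_lower[OF w(1)] w(2) by (metis order.trans)
    then have "m \<le> - fls_subdegree E - 1"
      by (simp only: ereal_less_eq of_int_le_iff)
    moreover have "degL (qf_disc A B C) / 2 - qf_min A B C = ereal (of_int (- fls_subdegree E - m))"
      unfolding half_deg qf_min 2 by simp
    ultimately show ?thesis
      by (auto simp: pos_ints_infty_def intro!: rev_image_eqI[of "- fls_subdegree E - m"])
  qed
qed

section \<open>Every positive integer is a value\<close>

lemma fls_subdegree_ratfunT_diff:
  assumes "q \<noteq> 0" "s \<noteq> 0" "polyT p / polyT q \<noteq> polyT r / polyT s"
  shows "fls_subdegree (polyT p / polyT q - polyT r / polyT s) \<le> int (degree q) + int (degree s)"
proof -
  have diff: "polyT p / polyT q - polyT r / polyT s = polyT (p * s - r * q) / polyT (q * s)"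
    using assms by (simp add: field_simps)
  have "p * s - r * q \<noteq> 0"
  proof
    assume "p * s - r * q = 0"
    then have "polyT p * polyT s = polyT r * polyT q"
      by (metis eq_iff_diff_eq_0 polyT_mult)
    then show False
      using assms by (simp add: frac_eq_eq)
  qed
  moreover have "q * s \<noteq> 0"
    using assms by simp
  ultimately have "fls_subdegree (polyT p / polyT q - polyT r / polyT s)
      = fls_subdegree (polyT (p * s - r * q)) - fls_subdegree (polyT (q * s))"
    unfolding diff by (intro fls_divide_subdegree) (simp_all only: polyT_eq_0_iff not_False_eq_True)
  also have "\<dots> = int (degree (q * s)) - int (degree (p * s - r * q))"
    unfolding fls_subdegree_polyT[OF \<open>p * s - r * q \<noteq> 0\<close>] fls_subdegree_polyT[OF \<open>q * s \<noteq> 0\<close>]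
    by simp
  also have "\<dots> \<le> int (degree q) + int (degree s)"
    using assms by (simp add: degree_mult_eq)
  finally show ?thesis .
qed

lemma not_ratfunT_if_approximable:
  assumes "\<And>N. \<exists>p q. q \<noteq> 0 \<and> \<alpha> \<noteq> polyT p / polyT q \<and>
    int N + int (degree q) < fls_subdegree (\<alpha> - polyT p / polyT q)"
  shows "\<alpha> \<notin> ratfunT"
proof
  assume "\<alpha> \<in> ratfunT"
  then obtain r s where "s \<noteq> 0" "\<alpha> = polyT r / polyT s"
    unfolding ratfunT_def by blast
  moreover obtain p q where "q \<noteq> 0" "\<alpha> \<noteq> polyT p / polyT q"
    "int (degree s) + int (degree q) < fls_subdegree (\<alpha> - polyT p / polyT q)"
    using assms by blast
  ultimately show False
    using fls_subdegree_ratfunT_diff[of s q r p] by simp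
qed

lemma polyT_minus_mult_nonzero:
  assumes "\<gamma> \<notin> ratfunT" "y \<noteq> 0"
  shows "polyT x - \<gamma> * polyT y \<noteq> 0"
proof
  assume "polyT x - \<gamma> * polyT y = 0"
  then have "\<gamma> = polyT x / polyT y"
    using assms(2) by (simp add: field_simps)
  then show False
    using assms unfolding ratfunT_def by blast
qed

locale quadratic_irrational =
  fixes \<beta> :: lser and b c :: "rat poly"
  assumes root: "\<beta>^2 = polyT b * \<beta> + polyT c"
    and irrational: "\<beta> \<notin> ratfunT"
begin

lemma conjugate_irrational: "polyT b - \<beta> \<notin> ratfunT"
proof
  assume "polyT b - \<beta> \<in> ratfunT"
  then obtain p q where "q \<noteq> 0" "polyT b - \<beta> = polyT p / polyT q"
    unfolding ratfunT_def by blast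
  then have "\<beta> = polyT (b * q - p) / polyT q"
    by (simp add: field_simps)
  then show False
    using irrational \<open>q \<noteq> 0\<close> unfolding ratfunT_def by blast
qed

lemma conjugate_diff_nonzero: "polyT b - 2 * \<beta> \<noteq> 0"
proof
  assume "polyT b - 2 * \<beta> = 0"
  moreover have "polyT [:2:] = 2"
    by (simp add: polyT_pCons)
  ultimately have "\<beta> = polyT b / polyT [:2:]"
    by (simp add: field_simps)
  then show False
    using irrational unfolding ratfunT_def by force
qed

lemma norm_factorization:
  "(polyT x - \<beta> * polyT y) * (polyT x - (polyT b - \<beta>) * polyT y) = polyT (x^2 - b * x * y - c * y^2)"
  unfolding polyT_diff polyT_mult polyT_power using root by algebra

lemma norm_nonzero:
  assumes "(x, y) \<noteq> (0, 0)"
  shows "x^2 - b * x * y - c * y^2 \<noteq> 0"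
proof (cases "y = 0")
  case False
  then have "polyT (x^2 - b * x * y - c * y^2) \<noteq> 0"
    unfolding norm_factorization[symmetric]
    using polyT_minus_mult_nonzero[OF irrational] polyT_minus_mult_nonzero[OF conjugate_irrational]
    by simp
  then show ?thesis
    by (metis polyT_0)
qed (use assms in simp)

text \<open>Liouville's inequality for quadratic irrationals: \<open>(q \<beta> - p) (q \<beta>' - p)\<close> is a nonzero polynomial.\<close>

lemma fls_subdegree_approx_le:
  assumes "q \<noteq> 0" "fls_subdegree (polyT b - 2 * \<beta>) \<le> 0"
  shows "fls_subdegree (\<beta> - polyT p / polyT q) \<le> 2 * int (degree q) - fls_subdegree (polyT b - 2 * \<beta>)"
proof -
  define s where "s = fls_subdegree (polyT b - 2 * \<beta>)"
  define w where "w = polyT p - \<beta> * polyT q"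
  define w' where "w' = polyT p - (polyT b - \<beta>) * polyT q"
  define d where "d = polyT q * (polyT b - 2 * \<beta>)"
  have "w \<noteq> 0" "w' \<noteq> 0"
    unfolding w_def w'_def
    using assms(1) polyT_minus_mult_nonzero irrational conjugate_irrational by simp_all
  have "fls_subdegree w + fls_subdegree w' \<le> 0"
  proof -
    have norm: "w * w' = polyT (p^2 - b * p * q - c * q^2)"
      unfolding w_def w'_def norm_factorization ..
    have "p^2 - b * p * q - c * q^2 \<noteq> 0"
      using assms(1) by (intro norm_nonzero) simp
    then have "fls_subdegree (w * w') = - int (degree (p^2 - b * p * q - c * q^2))"
      unfolding norm by (rule fls_subdegree_polyT)
    then show ?thesis
      using \<open>w \<noteq> 0\<close> \<open>w' \<noteq> 0\<close> by simp
  qed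
  have "d \<noteq> 0" and sd_d: "fls_subdegree d = s - int (degree q)"
    using assms(1) conjugate_diff_nonzero by (simp_all add: d_def s_def fls_subdegree_polyT)
  have "fls_subdegree w \<le> int (degree q) - s"
  proof (cases "fls_subdegree w \<le> fls_subdegree d")
    case True
    then show ?thesis
      using sd_d assms(2) unfolding s_def by linarith
  next
    case False
    have "w' = w - d"
      by (simp add: w_def w'_def d_def algebra_simps)
    then have "fls_subdegree w' = fls_subdegree d"
      using False \<open>d \<noteq> 0\<close> by (simp add: fls_subdegree_diff_eq2)
    then show ?thesis
      using \<open>fls_subdegree w + fls_subdegree w' \<le> 0\<close> sd_d by linarith
  qed
  moreover have "\<beta> - polyT p / polyT q = - w / polyT q"
    using assms(1) by (simp add: w_def field_simps)
  then have "fls_subdegree (\<beta> - polyT p / polyT q) = fls_subdegree w + int (degree q)"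
    using assms(1) \<open>w \<noteq> 0\<close> by (simp add: fls_divide_subdegree fls_subdegree_polyT)
  ultimately show ?thesis
    unfolding s_def by linarith
qed

end

text \<open>With \<open>F\<^sub>n = fib_poly k n\<close>, the quotients \<open>- F\<^sub>n / F\<^sub>n\<^sub>+\<^sub>1\<close> are the continued-fraction
  convergents of the root \<open>\<beta>\<close> below.\<close>

fun fib_poly :: "nat \<Rightarrow> nat \<Rightarrow> rat poly" where
  "fib_poly k 0 = 0"
| "fib_poly k (Suc 0) = 1"
| "fib_poly k (Suc (Suc n)) = monom 1 k * fib_poly k (Suc n) + fib_poly k n"

lemma fib_poly_Suc_degree:
  assumes "1 \<le> k"
  shows "fib_poly k (Suc n) \<noteq> 0 \<and> degree (fib_poly k (Suc n)) = k * n \<and> degree (fib_poly k n) < k * n + k"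
proof (induction n)
  case (Suc n)
  then have "degree (monom 1 k * fib_poly k (Suc n)) = k + k * n"
    by (simp add: degree_mult_eq degree_monom_eq)
  then have "degree (fib_poly k (Suc (Suc n))) = k * Suc n"
    using Suc by (simp add: degree_add_eq_left)
  moreover from this have "fib_poly k (Suc (Suc n)) \<noteq> 0"
    using assms by (metis degree_0 mult_is_0 nat.distinct(1) not_one_le_zero)
  ultimately show ?case
    using Suc assms by simp
qed (use assms in simp)

locale fib_quadratic =
  fixes \<beta> :: lser and k :: nat
  assumes k_pos: "1 \<le> k"
    and beta_root: "\<beta>^2 = fls_X_inv ^ k * \<beta> + 1"
    and fls_subdegree_beta: "fls_subdegree \<beta> = int k"
begin

lemma beta_nonzero: "\<beta> \<noteq> 0"
  using beta_root by auto

lemma fib_poly_Suc_nonzero: "fib_poly k (Suc n) \<noteq> 0"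
  using fib_poly_Suc_degree[OF k_pos] by blast

lemma degree_fib_poly_Suc: "degree (fib_poly k (Suc n)) = k * n"
  using fib_poly_Suc_degree[OF k_pos] by blast

lemma beta_power: "\<beta> ^ Suc n = polyT (fib_poly k (Suc n)) * \<beta> + polyT (fib_poly k n)"
proof (induction n)
  case (Suc n)
  have "\<beta> ^ Suc (Suc n) = \<beta> * \<beta> ^ Suc n"
    by (rule power_Suc)
  also have "\<dots> = polyT (fib_poly k (Suc n)) * \<beta>^2 + polyT (fib_poly k n) * \<beta>"
    unfolding Suc.IH by (simp add: algebra_simps power2_eq_square)
  also have "\<dots> = polyT (fib_poly k (Suc (Suc n))) * \<beta> + polyT (fib_poly k (Suc n))"
    unfolding beta_root by (simp add: algebra_simps)
  finally show ?case .
qed simp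

definition convergent :: "nat \<Rightarrow> lser" where
  "convergent n = polyT (- fib_poly k n) / polyT (fib_poly k (Suc n))"

lemma beta_minus_convergent: "\<beta> - convergent n = \<beta> ^ Suc n / polyT (fib_poly k (Suc n))"
  using fib_poly_Suc_nonzero[of n]
  unfolding convergent_def beta_power by (simp add: field_simps)

lemma beta_neq_convergent: "\<beta> \<noteq> convergent n"
  using beta_minus_convergent[of n] beta_nonzero fib_poly_Suc_nonzero[of n] by auto

lemma fls_subdegree_beta_minus_convergent:
  "fls_subdegree (\<beta> - convergent n) = int (2 * k * n + k)"
  using beta_nonzero fib_poly_Suc_nonzero[of n]
  by (simp add: beta_minus_convergent fls_divide_subdegree fls_subdegree_pow fls_subdegree_beta
      fls_subdegree_polyT degree_fib_poly_Suc algebra_simps)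

lemma beta_irrational: "\<beta> \<notin> ratfunT"
proof (rule not_ratfunT_if_approximable)
  fix N
  have "1 * N \<le> k * N"
    using k_pos by (rule mult_le_mono1)
  then have "int N \<le> int k * int N"
    by (metis mult_1 of_nat_le_iff of_nat_mult)
  moreover have "fls_subdegree (\<beta> - convergent N) = 2 * (int k * int N) + int k"
    by (simp add: fls_subdegree_beta_minus_convergent)
  moreover have "int (degree (fib_poly k (Suc N))) = int k * int N"
    by (simp add: degree_fib_poly_Suc)
  ultimately have "int N + int (degree (fib_poly k (Suc N))) < fls_subdegree (\<beta> - convergent N)"
    using k_pos by linarith
  then show "\<exists>p q. q \<noteq> 0 \<and> \<beta> \<noteq> polyT p / polyT q \<and>
      int N + int (degree q) < fls_subdegree (\<beta> - polyT p / polyT q)"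
    using beta_neq_convergent[of N] fib_poly_Suc_nonzero[of N] unfolding convergent_def by blast
qed

lemma fls_subdegree_conjugate_diff: "fls_subdegree (fls_X_inv ^ k - 2 * \<beta>) = - int k"
proof -
  have "fls_subdegree (2 * \<beta>) = int k"
    using beta_nonzero fls_subdegree_beta by (simp add: fls_subdegree_mult)
  then show ?thesis
    using k_pos by (subst fls_subdegree_diff_eq1) auto
qed

sublocale quadratic_irrational \<beta> "monom 1 k" 1
  by unfold_locales (simp_all add: beta_root beta_irrational)

lemma lagrange_value_beta: "lagrange_value \<beta> = ereal (of_int k)"
proof (rule lagrange_value_eqI)
  show "infinite (approx_set \<beta> (int k))"
  proof (rule infinite_approx_setI[of UNIV convergent])
    show "convergent n \<in> approx_set \<beta> (int k)" for n
    proof -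
      have "2 * int (degree (fib_poly k (Suc n))) + int k \<le> fls_subdegree (\<beta> - convergent n)"
        by (simp add: fls_subdegree_beta_minus_convergent degree_fib_poly_Suc)
      then show ?thesis
        unfolding convergent_def by (rule approx_setI[OF fib_poly_Suc_nonzero])
    qed
    show "inj (\<lambda>n. fls_subdegree (\<beta> - convergent n))"
      using k_pos by (intro injI) (simp add: fls_subdegree_beta_minus_convergent)
  qed simp
  show "finite (approx_set \<beta> j)" if "int k < j" for j
  proof -
    have "r \<notin> approx_set \<beta> j" for r
    proof
      assume "r \<in> approx_set \<beta> j"
      then obtain p q where "q \<noteq> 0" and "2 * int (degree q) + j \<le> fls_subdegree (\<beta> - polyT p / polyT q)"
        using irrational by (auto elim: approx_setE)
      moreover have "fls_subdegree (\<beta> - polyT p / polyT q) \<le> 2 * int (degree q) + int k"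
        using fls_subdegree_approx_le[OF \<open>q \<noteq> 0\<close>, of p] fls_subdegree_conjugate_diff by simp
      ultimately show False
        using that by linarith
    qed
    then have "approx_set \<beta> j = {}"
      by blast
    then show ?thesis
      by simp
  qed
qed

lemma beta_form_eq:
  "\<beta> * (polyT x)^2 + - (fls_X_inv ^ k * \<beta>) * polyT x * polyT y + - \<beta> * (polyT y)^2
    = \<beta> * polyT (x^2 - monom 1 k * x * y - 1 * y^2)"
  by (simp add: algebra_simps)

lemma beta_form_disc: "qf_disc \<beta> (- (fls_X_inv ^ k * \<beta>)) (- \<beta>) = (\<beta> * (fls_X_inv ^ k - 2 * \<beta>))^2"
proof -
  have "(- (T * \<beta>))^2 - 4 * \<beta> * - \<beta> = (\<beta> * (T - 2 * \<beta>))^2" if "\<beta>^2 = T * \<beta> + 1" for T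
    using that by algebra
  then show ?thesis
    unfolding qf_disc_def using beta_root .
qed

lemma beta_form_qf_min: "qf_min \<beta> (- (fls_X_inv ^ k * \<beta>)) (- \<beta>) = ereal (of_int (- int k))"
proof -
  have degL_beta_mult: "degL (\<beta> * polyT N) = ereal (of_int (int (degree N) - int k))" if "N \<noteq> 0" for N
    using that beta_nonzero by (simp add: degL_def fls_subdegree_polyT fls_subdegree_beta)
  show ?thesis
    unfolding qf_min_def beta_form_eq
  proof (rule cInf_eq_minimum)
    show "ereal (of_int (- int k)) \<in> {degL (\<beta> * polyT (x^2 - monom 1 k * x * y - 1 * y^2)) | x y. (x, y) \<noteq> (0, 0)}"
      using degL_beta_mult[of 1] by (intro CollectI exI[of _ 1] exI[of _ 0]) simp
  next
    fix w
    assume "w \<in> {degL (\<beta> * polyT (x^2 - monom 1 k * x * y - 1 * y^2)) | x y. (x, y) \<noteq> (0, 0)}"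
    then obtain x y where "(x, y) \<noteq> (0, 0)" and w: "w = degL (\<beta> * polyT (x^2 - monom 1 k * x * y - 1 * y^2))"
      by blast
    show "ereal (of_int (- int k)) \<le> w"
      unfolding w degL_beta_mult[OF norm_nonzero[OF \<open>(x, y) \<noteq> (0, 0)\<close>]] by simp
  qed
qed

lemma markov_value_beta_form:
  "qf_indefinite \<beta> (- (fls_X_inv ^ k * \<beta>)) (- \<beta>) \<and>
   degL (qf_disc \<beta> (- (fls_X_inv ^ k * \<beta>)) (- \<beta>)) / 2 - qf_min \<beta> (- (fls_X_inv ^ k * \<beta>)) (- \<beta>)
     = ereal (of_int k)"
proof -
  have "fls_X_inv ^ k - 2 * \<beta> \<noteq> 0"
    using conjugate_diff_nonzero by simp
  then have "\<beta> * (fls_X_inv ^ k - 2 * \<beta>) \<noteq> 0"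
    and "fls_subdegree (\<beta> * (fls_X_inv ^ k - 2 * \<beta>)) = 0"
    using beta_nonzero fls_subdegree_conjugate_diff fls_subdegree_beta by simp_all
  then show ?thesis
    using irrational unfolding qf_indefinite_def beta_form_disc beta_form_qf_min
    by (auto simp: degL_def fls_subdegree_pow)
qed

end

lemma fps_sqrt_exists:
  fixes a :: "rat fps"
  assumes "a $ 0 = 1"
  shows "\<exists>s. s ^ 2 = a \<and> s $ 0 = 1"
  using power_radical[of a "\<lambda>_ _. 1" 1] assms
  by (intro exI[of _ "fps_radical (\<lambda>_ _. 1) 2 a"]) (simp add: numeral_2_eq_2)

lemma fib_quadratic_exists:
  assumes "1 \<le> k"
  shows "\<exists>\<beta>. fib_quadratic \<beta> k"
proof -
  obtain s :: "rat fps" where s: "s ^ 2 = 1 + 4 * fps_X ^ (2 * k)" "s $ 0 = 1"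
    using fps_sqrt_exists[of "1 + 4 * fps_X ^ (2 * k)"] assms by auto
  define S where "S = fps_to_fls s"
  have S_nth_0: "fls_nth S 0 = 1"
    by (simp add: S_def s)
  have "S^2 = 1 + 4 * (fls_X ^ k)^2"
    unfolding S_def fps_to_fls_power[symmetric] s
    by (simp add: fls_times_fps_to_fls fps_to_fls_power power_mult[symmetric] mult.commute)
  \<comment> \<open>The root of \<open>\<beta>\<^sup>2 = T\<^sup>k \<beta> + 1\<close> that is small at infinity.\<close>
  define \<beta> where "\<beta> = fls_X_inv ^ k * ((1 - S) * fls_const (1 / 2))"
  have "fls_X_inv ^ k * fls_X ^ k = (1 :: lser)"
    by (simp add: fls_X_inv_power_times_conv_shift fls_X_power_conv_shift_1)
  moreover have "2 * fls_const (1 / 2) = (1 :: lser)"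
    unfolding fls_const_numeral[symmetric] fls_const_mult_const by simp
  moreover have "(T * ((1 - S) * h))^2 = T * (T * ((1 - S) * h)) + 1"
    if "T * Y = 1" "2 * h = 1" "S^2 = 1 + 4 * Y^2" for T Y h :: lser
    using that by algebra
  ultimately have root: "\<beta>^2 = fls_X_inv ^ k * \<beta> + 1"
    unfolding \<beta>_def using \<open>S^2 = 1 + 4 * (fls_X ^ k)^2\<close> by blast
  then have "\<beta> \<noteq> 0"
    by auto
  have "1 \<le> fls_subdegree ((1 - S) * fls_const (1 / 2))"
    using \<open>\<beta> \<noteq> 0\<close> S_nth_0 unfolding \<beta>_def
    by (intro fls_subdegree_geI) (auto simp: S_def)
  then have "1 - int k \<le> fls_subdegree \<beta>"
    using \<open>\<beta> \<noteq> 0\<close> unfolding \<beta>_def by (simp add: fls_subdegree_mult)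
  \<comment> \<open>\<open>T\<^sup>k - \<beta>\<close>, the other root, has degree \<open>k\<close>, and the product of the roots is \<open>-1\<close>.\<close>
  moreover have "fls_subdegree (\<beta> - fls_X_inv ^ k) = - int k"
    using calculation by (subst fls_subdegree_diff_eq2) auto
  moreover have "\<beta> * (\<beta> - fls_X_inv ^ k) = 1"
    using root by (simp add: power2_eq_square algebra_simps)
  then have "fls_subdegree \<beta> + fls_subdegree (\<beta> - fls_X_inv ^ k) = 0"
    by (metis fls_one_subdegree fls_subdegree_mult mult_zero_left mult_zero_right zero_neq_one)
  ultimately have "fls_subdegree \<beta> = int k"
    by linarith
  then show ?thesis
    using assms root by (intro exI[of _ \<beta>]) (simp add: fib_quadratic_def)
qed

section \<open>Infinity is a value\<close>

lemma less_power_three: "n < 3 ^ n"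
  by (induction n) auto

definition lacunary_series :: lser where
  "lacunary_series = fps_to_fls (Abs_fps (\<lambda>i. if \<exists>n. i = 3 ^ n then 1 else 0))"

lemma lacunary_series_approx:
  "\<exists>x. lacunary_series \<noteq> polyT x / polyT (monom 1 (3 ^ N)) \<and>
     fls_subdegree (lacunary_series - polyT x / polyT (monom 1 (3 ^ N))) = int (3 ^ Suc N)"
proof -
  define e :: nat where "e = 3 ^ N"
  define Q where "Q = polyT (monom 1 e)"
  have "Q \<noteq> 0" "fls_subdegree Q = - int e"
    by (simp_all add: Q_def fls_subdegree_polyT degree_monom_eq)
  obtain x where x: "\<forall>t\<le>0. fls_nth (polyT x) t = fls_nth (Q * lacunary_series) t"
    using polyT_polynomial_part by blast
  define w where "w = Q * lacunary_series - polyT x"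
  have w_nth: "fls_nth w t = (if t \<le> 0 then 0 else fls_nth lacunary_series (t + int e))" for t
    using x by (simp add: w_def Q_def fls_nth_polyT fls_X_inv_power_times_conv_shift fls_shifted_times_simps)
  have "fls_nth w (2 * int e) = 1"
  proof -
    have "2 * int e + int e = int (3 ^ Suc N)"
      by (simp add: e_def)
    then have "nat (2 * int e + int e) = 3 ^ Suc N"
      by (simp only: nat_int)
    then show ?thesis
      by (auto simp: w_nth e_def lacunary_series_def intro: exI[of _ "Suc N"])
  qed
  moreover have "fls_nth w t = 0" if "t < 2 * int e" for t
  proof (cases "t \<le> 0")
    case False
    then obtain m where m: "t = int m" "0 < m"
      by (metis not_le pos_int_cases)
    moreover have "int m < int (2 * e)"
      using that m(1) by simp
    ultimately have "3 ^ N < m + e" "m + e < 3 ^ Suc N"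
      unfolding of_nat_less_iff by (simp_all add: e_def)
    then have "m + e \<noteq> 3 ^ n" for n
      by (auto simp: power_strict_increasing_iff simp del: power_Suc)
    then show ?thesis
      using m by (simp add: w_nth lacunary_series_def nat_int_add)
  qed (simp add: w_nth)
  ultimately have "w \<noteq> 0" "fls_subdegree w = 2 * int e"
    by (auto intro: fls_subdegree_eqI)
  moreover have "lacunary_series - polyT x / Q = w / Q"
    using \<open>Q \<noteq> 0\<close> by (simp add: w_def field_simps)
  ultimately show ?thesis
    unfolding e_def[symmetric] Q_def[symmetric] using \<open>Q \<noteq> 0\<close> \<open>fls_subdegree Q = - int e\<close>
    by (intro exI[of _ x]) (auto simp: e_def fls_divide_subdegree)
qed

lemma lacunary_series_irrational: "lacunary_series \<notin> ratfunT"
proof (rule not_ratfunT_if_approximable)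
  fix N
  obtain x where "lacunary_series \<noteq> polyT x / polyT (monom 1 (3 ^ N))"
    and sd: "fls_subdegree (lacunary_series - polyT x / polyT (monom 1 (3 ^ N))) = int (3 ^ Suc N)"
    using lacunary_series_approx by blast
  moreover have "N + 3 ^ N < 3 ^ Suc N"
    using less_power_three[of N] by simp
  then have "int N + int (degree (monom (1::rat) (3 ^ N))) < int (3 ^ Suc N)"
    unfolding degree_monom_eq[OF one_neq_zero] by (metis of_nat_add of_nat_less_iff)
  ultimately show "\<exists>p q. q \<noteq> 0 \<and> lacunary_series \<noteq> polyT p / polyT q \<and>
      int N + int (degree q) < fls_subdegree (lacunary_series - polyT p / polyT q)"
    by (metis monom_eq_0_iff one_neq_zero)
qed

lemma lagrange_value_lacunary_series: "lagrange_value lacunary_series = \<infinity>"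
proof (rule lagrange_value_eq_infinity)
  fix j :: int
  obtain x where x: "\<And>N. lacunary_series \<noteq> polyT (x N) / polyT (monom 1 (3 ^ N)) \<and>
     fls_subdegree (lacunary_series - polyT (x N) / polyT (monom 1 (3 ^ N))) = int (3 ^ Suc N)"
    using lacunary_series_approx by metis
  show "infinite (approx_set lacunary_series j)"
  proof (rule infinite_approx_setI[of "{nat j..}" "\<lambda>N. polyT (x N) / polyT (monom 1 (3 ^ N))"])
    show "polyT (x N) / polyT (monom 1 (3 ^ N)) \<in> approx_set lacunary_series j" if "N \<in> {nat j..}" for N
    proof (rule approx_setI)
      have "int N < int (3 ^ N)"
        using less_power_three of_nat_less_iff by blast
      moreover have "j \<le> int N"
        using that by simp
      ultimately have "j \<le> int (3 ^ N)"
        by linarith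
      then show "2 * int (degree (monom (1::rat) (3 ^ N))) + j
          \<le> fls_subdegree (lacunary_series - polyT (x N) / polyT (monom 1 (3 ^ N)))"
        using x by (simp add: degree_monom_eq)
    qed simp
    show "inj_on (\<lambda>N. fls_subdegree (lacunary_series - polyT (x N) / polyT (monom 1 (3 ^ N)))) {nat j..}"
      using x by (auto intro!: inj_onI simp: power_inject_exp)
  qed (rule infinite_Ici)
qed

lemma markov_value_degenerate_form:
  assumes "\<alpha> \<notin> ratfunT"
  shows "qf_indefinite 0 1 \<alpha> \<and> degL (qf_disc 0 1 \<alpha>) / 2 - qf_min 0 1 \<alpha> = \<infinity>"
proof -
  have "qf_indefinite 0 1 \<alpha>"
    using assms unfolding qf_indefinite_def qf_disc_def by (auto intro!: exI[of _ 1])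
  moreover have "qf_min 0 1 \<alpha> \<le> degL (0 * (polyT 1)^2 + 1 * polyT 1 * polyT 0 + \<alpha> * (polyT 0)^2)"
    unfolding qf_min_def by (rule Inf_lower) (intro CollectI exI[of _ 1] exI[of _ 0], simp)
  then have "qf_min 0 1 \<alpha> = - \<infinity>"
    by (simp add: degL_def)
  ultimately show ?thesis
    by (simp add: qf_disc_def degL_def)
qed

lemma lagrange_spectrum_eq: "lagrange_spectrum = pos_ints_infty"
proof
  show "lagrange_spectrum \<subseteq> pos_ints_infty"
    unfolding lagrange_spectrum_def using lagrange_value_in_pos_ints_infty by blast
  have "\<infinity> \<in> lagrange_spectrum"
    using lacunary_series_irrational lagrange_value_lacunary_series
    unfolding lagrange_spectrum_def by (metis DiffI UNIV_I imageI)
  moreover have "ereal (of_int k) \<in> lagrange_spectrum" if k: "1 \<le> k" for k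
  proof -
    have "1 \<le> nat k"
      using nat_mono[OF k] by simp
    then obtain \<beta> where "fib_quadratic \<beta> (nat k)"
      using fib_quadratic_exists by blast
    then interpret fib_quadratic \<beta> "nat k" .
    show ?thesis
      using irrational lagrange_value_beta k unfolding lagrange_spectrum_def by force
  qed
  ultimately show "pos_ints_infty \<subseteq> lagrange_spectrum"
    unfolding pos_ints_infty_def by auto
qed

lemma markov_spectrum_eq: "markov_spectrum = pos_ints_infty"
proof
  show "markov_spectrum \<subseteq> pos_ints_infty"
    unfolding markov_spectrum_def using markov_value_in_pos_ints_infty by blast
  have "\<infinity> \<in> markov_spectrum"
    using markov_value_degenerate_form[OF lacunary_series_irrational]
    unfolding markov_spectrum_def by force
  moreover have "ereal (of_int k) \<in> markov_spectrum" if k: "1 \<le> k" for k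
  proof -
    have "1 \<le> nat k"
      using nat_mono[OF k] by simp
    then obtain \<beta> where "fib_quadratic \<beta> (nat k)"
      using fib_quadratic_exists by blast
    then interpret fib_quadratic \<beta> "nat k" .
    show ?thesis
      using markov_value_beta_form k unfolding markov_spectrum_def by force
  qed
  ultimately show "pos_ints_infty \<subseteq> markov_spectrum"
    unfolding pos_ints_infty_def by auto
qed

theorem corollary4:
  shows "lagrange_spectrum = markov_spectrum"
  by (simp add: lagrange_spectrum_eq markov_spectrum_eq)

end
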